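(* For all $p,q\in\mathcal{P}$, the germs $pq$ and $p/q$ both belong to $\mathcal{P}$.
   Context: All functions are real-valued functions defined on some interval $(a,\infty)$. Two such functions are identified if they agree for all sufficiently large $x$; these equivalence classes are germs at $+\infty$. Write $\ln^{(k)}$ for the $k$-fold iterated natural logarithm, with $\ln^{(0)}(x)=x$. Let $\mathcal{H}$ be the smallest set of germs at $+\infty$ satisfying: (i) $\ln^{(k)}\in\mathcal{H}$ for every integer $k\ge0$; (ii) if $f\in\mathcal{H}$, then $\exp\circ f\in\mathcal{H}$, and if moreover $f$ is eventually positive, then $f^\alpha\in\mathcal{H}$ for every real $\alpha>0$; (iii) if $f,g\in\mathcal{H}$ and $f\ne g$ (as germs), then $fg\in\mathcal{H}$; (iv) if $f,g\in\mathcal{H}$ and $f(x)/g(x)\to+\infty$, then $f/g\in\mathcal{H}$. Let $\mathcal{P}=\mathcal{H}\cup\{1\}\cup\{1/f:f\in\mathcal{H}\}$, where $1$ is the constant germ. *)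

theory Defs
  imports Complex_Main
begin

text \<open>Germs at +infinity are represented by functions real => real; a set of germs
is represented by the set of all its representatives, i.e. a set of functions closed
under eventual equality at_top (rule germ_eq below).\<close>

inductive_set Hset :: "(real \<Rightarrow> real) set" where
  iter_ln: "(ln ^^ k) \<in> Hset"
| exp_comp: "f \<in> Hset \<Longrightarrow> (\<lambda>x. exp (f x)) \<in> Hset"
| power: "f \<in> Hset \<Longrightarrow> eventually (\<lambda>x. f x > 0) at_top \<Longrightarrow> (\<alpha>::real) > 0
           \<Longrightarrow> (\<lambda>x. f x powr \<alpha>) \<in> Hset"
| times: "f \<in> Hset \<Longrightarrow> g \<in> Hset \<Longrightarrow> \<not> eventually (\<lambda>x. f x = g x) at_top
           \<Longrightarrow> (\<lambda>x. f x * g x) \<in> Hset"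
| quot: "f \<in> Hset \<Longrightarrow> g \<in> Hset \<Longrightarrow> filterlim (\<lambda>x. f x / g x) at_top at_top
           \<Longrightarrow> (\<lambda>x. f x / g x) \<in> Hset"
| germ_eq: "f \<in> Hset \<Longrightarrow> eventually (\<lambda>x. f x = g x) at_top \<Longrightarrow> g \<in> Hset"

definition Pset :: "(real \<Rightarrow> real) set" where
  "Pset = {p. p \<in> Hset \<or> eventually (\<lambda>x. p x = 1) at_top
              \<or> (\<exists>f \<in> Hset. eventually (\<lambda>x. p x = 1 / f x) at_top)}"

end

theory Submission
  imports Defs "HOL-Real_Asymp.Real_Asymp"
begin

(*
  The key fact is a Hardy-field-like property of H: every f in H tends to +infinity
  and any f, g in H are comparable (f = g eventually, or f/g or g/f tends to
  +infinity).  H is stratified into levels: level 0 holds the iterated logarithms,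
  level n+1 adds the germs tending to +infinity whose logarithm is a real linear
  combination of level-n germs.
  (1) The levels are closed under rules (ii)-(iv) up to a shift, so H lies in their
      union.
  (2) A real combination of pairwise comparable germs tending to +infinity is
      eventually 0 or tends to +-infinity (its dominant terms decide); applied to
      ln f - ln g this lifts comparability from level n to level n+1.
  Hence f/g lies in P for f, g in H.  Every element of P is u/v with u, v in H or
  equal to 1, a set closed under products, and the theorem follows from
  (u1/v1)(u2/v2) = (u1 u2)/(v1 v2) and (u1/v1)/(u2/v2) = (u1 v2)/(v1 u2).
*)

lemma filterlim_germ_cong:
  fixes f g :: "real \<Rightarrow> real"
  assumes "filterlim f F at_top" "eventually (\<lambda>x. f x = g x) at_top"
  shows "filterlim g F at_top"
  using filterlim_cong[OF refl refl assms(2)] assms(1) by simp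

lemma eventually_pos_at_top:
  "filterlim f at_top at_top \<Longrightarrow> eventually (\<lambda>x. f x > (0::real)) at_top"
  using filterlim_at_top_dense by blast

lemma iter_ln_at_top: "filterlim (ln ^^ k) at_top (at_top :: real filter)"
proof (induction k)
  case 0
  then show ?case by (simp add: filterlim_ident)
next
  case (Suc k)
  have "filterlim (\<lambda>x. ln ((ln ^^ k) x)) at_top (at_top :: real filter)"
    by (rule filterlim_compose[OF ln_at_top Suc.IH])
  then show ?case by (simp add: o_def)
qed

section \<open>Real linear combinations of germs\<close>

fun lincomb :: "(real \<times> (real \<Rightarrow> real)) list \<Rightarrow> real \<Rightarrow> real" where
  "lincomb [] x = 0"
| "lincomb (t # L) x = fst t * snd t x + lincomb L x"

definition scale_terms :: "real \<Rightarrow> (real \<times> (real \<Rightarrow> real)) list \<Rightarrow> (real \<times> (real \<Rightarrow> real)) list" where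
  "scale_terms a L = map (\<lambda>t. (a * fst t, snd t)) L"

lemma lincomb_append: "lincomb (L1 @ L2) x = lincomb L1 x + lincomb L2 x"
  by (induction L1) auto

lemma lincomb_scale: "lincomb (scale_terms a L) x = a * lincomb L x"
  by (induction L) (auto simp: scale_terms_def algebra_simps)

lemma germs_scale_terms: "snd ` set (scale_terms a L) = snd ` set L"
  by (auto simp: scale_terms_def image_image)

lemma lincomb_filter: "lincomb L x = lincomb (filter P L) x + lincomb (filter (\<lambda>t. \<not> P t) L) x"
  by (induction L) auto

lemma lincomb_all_equal:
  "\<forall>t\<in>set L. eventually (\<lambda>x. snd t x = g x) at_top \<Longrightarrow>
    eventually (\<lambda>x. lincomb L x = sum_list (map fst L) * g x) at_top"
proof (induction L)
  case (Cons t L)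
  then have "eventually (\<lambda>x. snd t x = g x) at_top"
    "eventually (\<lambda>x. lincomb L x = sum_list (map fst L) * g x) at_top" by auto
  then show ?case by eventually_elim (simp add: algebra_simps)
qed simp

lemma lincomb_small:
  "\<forall>t\<in>set L. ((\<lambda>x. snd t x / g x) \<longlongrightarrow> 0) at_top \<Longrightarrow>
    ((\<lambda>x. lincomb L x / g x) \<longlongrightarrow> 0) at_top"
proof (induction L)
  case (Cons t L)
  then have "((\<lambda>x. fst t * (snd t x / g x) + lincomb L x / g x) \<longlongrightarrow> fst t * 0 + 0) at_top"
    by (intro tendsto_intros) auto
  then show ?case by (simp add: add_divide_distrib)
qed simp

section \<open>Comparability and the growth preorder\<close>

definition comparable :: "(real \<Rightarrow> real) \<Rightarrow> (real \<Rightarrow> real) \<Rightarrow> bool" where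
  "comparable f g \<longleftrightarrow> eventually (\<lambda>x. f x = g x) at_top
     \<or> filterlim (\<lambda>x. f x / g x) at_top at_top \<or> filterlim (\<lambda>x. g x / f x) at_top at_top"

definition grows_no_faster :: "(real \<Rightarrow> real) \<Rightarrow> (real \<Rightarrow> real) \<Rightarrow> bool" where
  "grows_no_faster h g \<longleftrightarrow> eventually (\<lambda>x. h x = g x) at_top
     \<or> filterlim (\<lambda>x. g x / h x) at_top at_top"

lemma comparable_germ_cong:
  assumes "comparable f g" "eventually (\<lambda>x. f x = f' x) at_top" "eventually (\<lambda>x. g x = g' x) at_top"
  shows "comparable f' g'"
proof -
  have "eventually (\<lambda>x. f x / g x = f' x / g' x) at_top"
    "eventually (\<lambda>x. g x / f x = g' x / f' x) at_top"
    using assms(2,3) by (eventually_elim, simp)+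
  moreover have "eventually (\<lambda>x. f' x = g' x) at_top" if "eventually (\<lambda>x. f x = g x) at_top"
    using that assms(2,3) by eventually_elim simp
  ultimately show ?thesis
    using assms(1) unfolding comparable_def by (blast intro: filterlim_germ_cong)
qed

lemma comparable_grows_no_faster:
  "comparable f g \<Longrightarrow> grows_no_faster f g \<or> grows_no_faster g f"
  unfolding comparable_def grows_no_faster_def by blast

lemma grows_no_faster_trans:
  assumes g: "filterlim g at_top at_top"
    and hg: "grows_no_faster h g" and gk: "grows_no_faster g k"
  shows "grows_no_faster h k"
proof -
  from gk consider (eq') "eventually (\<lambda>x. g x = k x) at_top"
    | (lim') "filterlim (\<lambda>x. k x / g x) at_top at_top"
    unfolding grows_no_faster_def by blast
  then show ?thesis
  proof cases
    case eq'
    from hg consider "eventually (\<lambda>x. h x = g x) at_top"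
      | "filterlim (\<lambda>x. g x / h x) at_top at_top"
      unfolding grows_no_faster_def by blast
    then show ?thesis
    proof cases
      case 1
      have "eventually (\<lambda>x. h x = k x) at_top" using 1 eq' by eventually_elim simp
      then show ?thesis unfolding grows_no_faster_def ..
    next
      case 2
      have "eventually (\<lambda>x. g x / h x = k x / h x) at_top" using eq' by eventually_elim simp
      with 2 show ?thesis unfolding grows_no_faster_def by (blast intro: filterlim_germ_cong)
    qed
  next
    case lim'
    from hg consider "eventually (\<lambda>x. h x = g x) at_top"
      | "filterlim (\<lambda>x. g x / h x) at_top at_top"
      unfolding grows_no_faster_def by blast
    then show ?thesis
    proof cases
      case 1
      have "eventually (\<lambda>x. k x / g x = k x / h x) at_top" using 1 by eventually_elim simp
      with lim' show ?thesis unfolding grows_no_faster_def by (blast intro: filterlim_germ_cong)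
    next
      case 2
      have "filterlim (\<lambda>x. k x / g x * (g x / h x)) at_top at_top"
        by (rule filterlim_at_top_mult_at_top[OF lim' 2])
      moreover have "eventually (\<lambda>x. k x / g x * (g x / h x) = k x / h x) at_top"
        using eventually_pos_at_top[OF g] by eventually_elim simp
      ultimately show ?thesis unfolding grows_no_faster_def by (blast intro: filterlim_germ_cong)
    qed
  qed
qed

lemma fastest_growing_exists:
  assumes T_top: "\<forall>h\<in>T. filterlim h at_top at_top"
    and T_comp: "\<forall>f\<in>T. \<forall>g\<in>T. comparable f g"
    and "finite S" "S \<noteq> {}" "S \<subseteq> T"
  shows "\<exists>h0\<in>S. \<forall>h\<in>S. grows_no_faster h h0"
  using assms(3-5)
proof (induction S rule: finite_ne_induct)
  case (singleton a)
  then show ?case by (simp add: grows_no_faster_def)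
next
  case (insert a S)
  then obtain h0 where h0: "h0 \<in> S" "\<forall>h\<in>S. grows_no_faster h h0" by auto
  have in_T: "h0 \<in> T" "a \<in> T" using h0(1) insert.prems by auto
  from comparable_grows_no_faster[of a h0] T_comp in_T
  consider "grows_no_faster a h0" | "grows_no_faster h0 a" by blast
  then show ?case
  proof cases
    case 1
    then show ?thesis using h0 by auto
  next
    case 2
    have "grows_no_faster h a" if "h \<in> S" for h
      using grows_no_faster_trans[of h0 h a] T_top in_T h0(2) that 2 by blast
    then show ?thesis by (auto simp: grows_no_faster_def)
  qed
qed

lemma lincomb_dominant_part:
  assumes below: "\<forall>t\<in>set L. grows_no_faster (snd t) h0"
  defines "equals_h0 \<equiv> \<lambda>t :: real \<times> (real \<Rightarrow> real). eventually (\<lambda>x. snd t x = h0 x) at_top"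
  shows "eventually (\<lambda>x. lincomb L x
            = sum_list (map fst (filter equals_h0 L)) * h0 x + lincomb (filter (\<lambda>t. \<not> equals_h0 t) L) x) at_top"
    and "((\<lambda>x. lincomb (filter (\<lambda>t. \<not> equals_h0 t) L) x / h0 x) \<longlongrightarrow> 0) at_top"
proof -
  have "eventually (\<lambda>x. lincomb (filter equals_h0 L) x = sum_list (map fst (filter equals_h0 L)) * h0 x) at_top"
    by (rule lincomb_all_equal) (auto simp: equals_h0_def)
  then show "eventually (\<lambda>x. lincomb L x
            = sum_list (map fst (filter equals_h0 L)) * h0 x + lincomb (filter (\<lambda>t. \<not> equals_h0 t) L) x) at_top"
    by eventually_elim (metis lincomb_filter)
  show "((\<lambda>x. lincomb (filter (\<lambda>t. \<not> equals_h0 t) L) x / h0 x) \<longlongrightarrow> 0) at_top"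
  proof (rule lincomb_small, intro ballI)
    fix t assume "t \<in> set (filter (\<lambda>t. \<not> equals_h0 t) L)"
    then have "filterlim (\<lambda>x. h0 x / snd t x) at_top at_top"
      using below by (auto simp: equals_h0_def grows_no_faster_def)
    from tendsto_inverse_0_at_top[OF this]
    show "((\<lambda>x. snd t x / h0 x) \<longlongrightarrow> 0) at_top" by simp
  qed
qed

lemma infinite_of_ratio_limit:
  fixes f h :: "real \<Rightarrow> real"
  assumes h: "filterlim h at_top at_top"
    and lim: "((\<lambda>x. f x / h x) \<longlongrightarrow> C) at_top" and "C \<noteq> 0"
  shows "filterlim f at_top at_top \<or> filterlim f at_bot at_top"
proof -
  have eq: "eventually (\<lambda>x. f x / h x * h x = f x) at_top"
    using eventually_pos_at_top[OF h] by eventually_elim simp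
  show ?thesis
  proof (cases "C > 0")
    case True
    from filterlim_tendsto_pos_mult_at_top[OF lim True h] eq
    show ?thesis by (blast intro: filterlim_germ_cong)
  next
    case False
    with \<open>C \<noteq> 0\<close> have "C < 0" by simp
    from filterlim_tendsto_neg_mult_at_bot[OF lim this h] eq
    show ?thesis by (blast intro: filterlim_germ_cong)
  qed
qed

text \<open>By induction on the
  number of terms: split off the terms equal to a fastest-growing germ h0; if their
  coefficients cancel, recurse on the rest, otherwise h0 dominates.\<close>
lemma lincomb_trichotomy:
  assumes T_top: "\<forall>h\<in>T. filterlim h at_top at_top"
    and T_comp: "\<forall>f\<in>T. \<forall>g\<in>T. comparable f g"
    and "snd ` set L \<subseteq> T"
  shows "eventually (\<lambda>x. lincomb L x = 0) at_top
     \<or> filterlim (lincomb L) at_top at_top \<or> filterlim (lincomb L) at_bot at_top"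
  using assms(3)
proof (induction "length L" arbitrary: L rule: less_induct)
  case less
  show ?case
  proof (cases "L = []")
    case True
    then show ?thesis by simp
  next
    case False
    then obtain h0 where h0: "h0 \<in> snd ` set L" "\<forall>h\<in>snd ` set L. grows_no_faster h h0"
      using fastest_growing_exists[OF T_top T_comp, of "snd ` set L"] less.prems by auto
    define equals_h0 where "equals_h0 = (\<lambda>t :: real \<times> (real \<Rightarrow> real). eventually (\<lambda>x. snd t x = h0 x) at_top)"
    define C where "C = sum_list (map fst (filter equals_h0 L))"
    define R where "R = filter (\<lambda>t. \<not> equals_h0 t) L"
    have split: "eventually (\<lambda>x. lincomb L x = C * h0 x + lincomb R x) at_top"
      and small: "((\<lambda>x. lincomb R x / h0 x) \<longlongrightarrow> 0) at_top"
      using lincomb_dominant_part[of L h0] h0(2) unfolding C_def R_def equals_h0_def by auto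
    have h0_top: "filterlim h0 at_top at_top" using T_top h0(1) less.prems by auto
    show ?thesis
    proof (cases "C = 0")
      case True
      obtain t where "t \<in> set L" "snd t = h0" using h0(1) by auto
      then have "length R < length L"
        unfolding R_def using length_filter_less[of t L] by (auto simp: equals_h0_def)
      moreover have "snd ` set R \<subseteq> T" using less.prems by (auto simp: R_def)
      ultimately have IH: "eventually (\<lambda>x. lincomb R x = 0) at_top
          \<or> filterlim (lincomb R) at_top at_top \<or> filterlim (lincomb R) at_bot at_top"
        using less.hyps by blast
      have eq: "eventually (\<lambda>x. lincomb R x = lincomb L x) at_top"
        using split by eventually_elim (simp add: True)
      from IH show ?thesis
        using filterlim_germ_cong[OF _ eq] eventually_elim2[OF eq] by fastforce
    next
      case False
      have "((\<lambda>x. C + lincomb R x / h0 x) \<longlongrightarrow> C + 0) at_top"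
        by (intro tendsto_intros small)
      moreover have "eventually (\<lambda>x. C + lincomb R x / h0 x = lincomb L x / h0 x) at_top"
        using split eventually_pos_at_top[OF h0_top]
        by eventually_elim (simp add: add_divide_distrib)
      ultimately have "((\<lambda>x. lincomb L x / h0 x) \<longlongrightarrow> C) at_top"
        by (simp add: tendsto_cong)
      from infinite_of_ratio_limit[OF h0_top this False] show ?thesis by blast
    qed
  qed
qed

lemma comparable_of_log_difference:
  fixes f g d :: "real \<Rightarrow> real"
  assumes f_pos: "eventually (\<lambda>x. f x > 0) at_top" and g_pos: "eventually (\<lambda>x. g x > 0) at_top"
    and d: "eventually (\<lambda>x. d x = ln (f x) - ln (g x)) at_top"
    and trich: "eventually (\<lambda>x. d x = 0) at_top \<or> filterlim d at_top at_top \<or> filterlim d at_bot at_top"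
  shows "comparable f g"
proof -
  have ratio: "eventually (\<lambda>x. exp (d x) = f x / g x) at_top"
    using d f_pos g_pos by eventually_elim (simp add: exp_diff)
  from trich consider "eventually (\<lambda>x. d x = 0) at_top" | "filterlim d at_top at_top"
    | "filterlim (\<lambda>x. - d x) at_top at_top"
    using filterlim_uminus_at_bot by blast
  then show ?thesis
  proof cases
    case 1
    have "eventually (\<lambda>x. f x = g x) at_top" using 1 d f_pos g_pos
      by eventually_elim (simp add: ln_inj_iff)
    then show ?thesis unfolding comparable_def by blast
  next
    case 2
    from filterlim_compose[OF exp_at_top 2] ratio
    show ?thesis unfolding comparable_def by (blast intro: filterlim_germ_cong)
  next
    case 3
    have "eventually (\<lambda>x. exp (- d x) = g x / f x) at_top"
      using ratio by eventually_elim (simp add: exp_minus field_simps)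
    with filterlim_compose[OF exp_at_top 3]
    show ?thesis unfolding comparable_def by (blast intro: filterlim_germ_cong)
  qed
qed

lemma iter_ln_le: "eventually (\<lambda>z. 0 < (ln ^^ m) z \<and> (ln ^^ m) z \<le> (z::real)) at_top"
proof (induction m)
  case 0
  then show ?case using eventually_gt_at_top[of 0] by eventually_elim simp
next
  case (Suc m)
  have "eventually (\<lambda>z. 0 < (ln ^^ m) (ln z) \<and> (ln ^^ m) (ln z) \<le> ln (z::real)) at_top"
    by (rule eventually_compose_filterlim[OF Suc.IH ln_at_top])
  then show ?case using eventually_gt_at_top[of 0]
  proof eventually_elim
    case (elim z)
    have "ln z < z" using elim(2) ln_less_self by blast
    then show ?case unfolding funpow_Suc_right o_apply using elim(1) by linarith
  qed
qed

text \<open>x / ln^(m) x tends to infinity for m > 0, since ln^(m) x <= ln x.\<close>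
lemma ident_over_iter_ln: "0 < m \<Longrightarrow> filterlim (\<lambda>z. z / (ln ^^ m) z) at_top (at_top::real filter)"
proof -
  assume "0 < m"
  then obtain m' where m: "m = Suc m'" by (cases m) auto
  have ev: "eventually (\<lambda>z. 0 < (ln ^^ m') (ln z) \<and> (ln ^^ m') (ln z) \<le> ln (z::real)) at_top"
    by (rule eventually_compose_filterlim[OF iter_ln_le ln_at_top])
  have lim: "filterlim (\<lambda>z::real. z / ln z) at_top at_top" by real_asymp
  have "eventually (\<lambda>z::real. z / ln z \<le> z / (ln ^^ m) z) at_top"
    using ev eventually_gt_at_top[of "0::real"]
  proof eventually_elim
    case (elim z)
    have "0 < ln z" using elim by linarith
    then show ?case unfolding m funpow_Suc_right o_apply
      by (intro divide_left_mono) (use elim in \<open>auto intro!: mult_pos_pos\<close>)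
  qed
  then show ?thesis by (rule filterlim_at_top_mono[OF lim])
qed

lemma iter_ln_ratio:
  assumes "i < j" shows "filterlim (\<lambda>x. (ln ^^ i) x / (ln ^^ j) x) at_top (at_top::real filter)"
proof -
  have "filterlim (\<lambda>x. (ln ^^ i) x / (ln ^^ (j - i)) ((ln ^^ i) x)) at_top (at_top::real filter)"
    by (rule filterlim_compose[OF ident_over_iter_ln iter_ln_at_top]) (use assms in simp)
  moreover have "(ln ^^ (j - i)) ((ln ^^ i) x) = (ln ^^ j) (x::real)" for x
    using assms by (metis funpow_add le_add_diff_inverse2 less_imp_le o_apply)
  ultimately show ?thesis by simp
qed

lemma iter_ln_comparable: "comparable (ln ^^ i) (ln ^^ j)"
  using iter_ln_ratio[of i j] iter_ln_ratio[of j i]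
  by (cases i j rule: linorder_cases) (auto simp: comparable_def)

section \<open>The level hierarchy\<close>

fun level :: "nat \<Rightarrow> (real \<Rightarrow> real) set" where
  "level 0 = {f. \<exists>k. eventually (\<lambda>x. f x = (ln ^^ k) x) at_top}"
| "level (Suc n) = level n \<union> {f. filterlim f at_top at_top \<and>
      (\<exists>L. snd ` set L \<subseteq> level n \<and> eventually (\<lambda>x. ln (f x) = lincomb L x) at_top)}"

lemma level_mono: "m \<le> n \<Longrightarrow> level m \<subseteq> level n"
  by (rule lift_Suc_mono_le[of level]) auto

lemma level_germ_cong: "f \<in> level n \<Longrightarrow> eventually (\<lambda>x. f x = g x) at_top \<Longrightarrow> g \<in> level n"
proof (induction n arbitrary: f)
  case 0
  then obtain k where "eventually (\<lambda>x. f x = (ln ^^ k) x) at_top" by auto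
  with 0(2) have "eventually (\<lambda>x. g x = (ln ^^ k) x) at_top" by eventually_elim simp
  then show ?case by auto
next
  case (Suc n)
  show ?case
  proof (cases "f \<in> level n")
    case True
    then show ?thesis using Suc.IH[OF True Suc.prems(2)] by simp
  next
    case False
    then obtain L where L: "filterlim f at_top at_top" "snd ` set L \<subseteq> level n"
      "eventually (\<lambda>x. ln (f x) = lincomb L x) at_top" using Suc.prems(1) by auto
    have "eventually (\<lambda>x. ln (g x) = lincomb L x) at_top"
      using L(3) Suc.prems(2) by eventually_elim simp
    with filterlim_germ_cong[OF L(1) Suc.prems(2)] L(2) show ?thesis by auto
  qed
qed

lemma level_at_top: "f \<in> level n \<Longrightarrow> filterlim f at_top at_top"
proof (induction n)
  case 0
  then obtain k where "eventually (\<lambda>x. f x = (ln ^^ k) x) at_top" by auto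
  then have "eventually (\<lambda>x. (ln ^^ k) x = f x) at_top" by eventually_elim simp
  then show ?case using filterlim_germ_cong[OF iter_ln_at_top] by blast
qed auto

lemma level_pos: "f \<in> level n \<Longrightarrow> eventually (\<lambda>x. f x > 0) at_top"
  using level_at_top eventually_pos_at_top by blast

lemma level_Suc_ln:
  "f \<in> level (Suc n) \<Longrightarrow> \<exists>L. snd ` set L \<subseteq> level n \<and> eventually (\<lambda>x. ln (f x) = lincomb L x) at_top"
proof (induction n arbitrary: f)
  case 0
  show ?case
  proof (cases "f \<in> level 0")
    case True
    then obtain k where k: "eventually (\<lambda>x. f x = (ln ^^ k) x) at_top" by auto
    have "(ln ^^ Suc k) \<in> level 0" by (auto intro!: exI[of _ "Suc k"])
    moreover have "eventually (\<lambda>x. ln (f x) = lincomb [(1, ln ^^ Suc k)] x) at_top"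
      using k by eventually_elim simp
    ultimately show ?thesis by (intro exI[of _ "[(1, ln ^^ Suc k)]"]) auto
  next
    case False
    with 0 show ?thesis unfolding level.simps(2)[of 0] by blast
  qed
next
  case (Suc n)
  show ?case
  proof (cases "f \<in> level (Suc n)")
    case True
    then obtain L where "snd ` set L \<subseteq> level n" "eventually (\<lambda>x. ln (f x) = lincomb L x) at_top"
      using Suc.IH by blast
    moreover have "level n \<subseteq> level (Suc n)" by (rule level_mono) simp
    ultimately show ?thesis by blast
  next
    case False
    with Suc.prems show ?thesis unfolding level.simps(2)[of "Suc n"] by blast
  qed
qed

lemma level_ln:
  "f \<in> level n \<Longrightarrow> \<exists>L. snd ` set L \<subseteq> level n \<and> eventually (\<lambda>x. ln (f x) = lincomb L x) at_top"
  by (rule level_Suc_ln) simp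

lemma level_SucI:
  "snd ` set L \<subseteq> level n \<Longrightarrow> filterlim f at_top at_top \<Longrightarrow>
    eventually (\<lambda>x. ln (f x) = lincomb L x) at_top \<Longrightarrow> f \<in> level (Suc n)"
  unfolding level.simps(2) by blast

lemma level_common_ln:
  assumes "f \<in> level n1" "g \<in> level n2"
  obtains L1 L2 where "snd ` set L1 \<subseteq> level (max n1 n2)" "snd ` set L2 \<subseteq> level (max n1 n2)"
    "eventually (\<lambda>x. ln (f x) = lincomb L1 x) at_top" "eventually (\<lambda>x. ln (g x) = lincomb L2 x) at_top"
proof -
  have "f \<in> level (max n1 n2)" "g \<in> level (max n1 n2)"
    using assms level_mono[of n1 "max n1 n2"] level_mono[of n2 "max n1 n2"] by auto
  from level_ln[OF this(1)] level_ln[OF this(2)] show ?thesis using that by blast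
qed

lemma level_exp:
  assumes f: "f \<in> level n" shows "(\<lambda>x. exp (f x)) \<in> level (Suc n)"
proof (rule level_SucI[of "[(1, f)]"])
  show "snd ` set [(1, f)] \<subseteq> level n" using f by simp
  show "filterlim (\<lambda>x. exp (f x)) at_top at_top"
    by (rule filterlim_compose[OF exp_at_top level_at_top[OF f]])
  show "eventually (\<lambda>x. ln (exp (f x)) = lincomb [(1, f)] x) at_top" by simp
qed

lemma level_powr:
  assumes f: "f \<in> level n" and "\<alpha> > 0"
  shows "(\<lambda>x. f x powr \<alpha>) \<in> level (Suc n)"
proof -
  obtain L where L: "snd ` set L \<subseteq> level n" "eventually (\<lambda>x. ln (f x) = lincomb L x) at_top"
    using level_ln[OF f] by blast
  have "eventually (\<lambda>x. ln (f x powr \<alpha>) = lincomb (scale_terms \<alpha> L) x) at_top"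
    using L(2) by eventually_elim (simp add: lincomb_scale ln_powr)
  with L(1) show ?thesis
    using filterlim_compose[OF real_powr_at_top[OF \<open>\<alpha> > 0\<close>] level_at_top[OF f]]
    by (intro level_SucI[of "scale_terms \<alpha> L"]) (auto simp: germs_scale_terms)
qed

lemma level_mult:
  assumes f: "f \<in> level n1" and g: "g \<in> level n2"
  shows "(\<lambda>x. f x * g x) \<in> level (Suc (max n1 n2))"
proof -
  obtain L1 L2 where L: "snd ` set L1 \<subseteq> level (max n1 n2)" "snd ` set L2 \<subseteq> level (max n1 n2)"
    "eventually (\<lambda>x. ln (f x) = lincomb L1 x) at_top" "eventually (\<lambda>x. ln (g x) = lincomb L2 x) at_top"
    using level_common_ln[OF f g] by blast
  have "eventually (\<lambda>x. ln (f x * g x) = lincomb (L1 @ L2) x) at_top"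
    using L(3,4) level_pos[OF f] level_pos[OF g]
    by eventually_elim (simp add: lincomb_append ln_mult_pos)
  with L(1,2) show ?thesis
    using filterlim_at_top_mult_at_top[OF level_at_top[OF f] level_at_top[OF g]]
    by (intro level_SucI[of "L1 @ L2"]) auto
qed

lemma level_divide:
  assumes f: "f \<in> level n1" and g: "g \<in> level n2"
    and top: "filterlim (\<lambda>x. f x / g x) at_top at_top"
  shows "(\<lambda>x. f x / g x) \<in> level (Suc (max n1 n2))"
proof -
  obtain L1 L2 where L: "snd ` set L1 \<subseteq> level (max n1 n2)" "snd ` set L2 \<subseteq> level (max n1 n2)"
    "eventually (\<lambda>x. ln (f x) = lincomb L1 x) at_top" "eventually (\<lambda>x. ln (g x) = lincomb L2 x) at_top"
    using level_common_ln[OF f g] by blast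
  have "eventually (\<lambda>x. ln (f x / g x) = lincomb (L1 @ scale_terms (-1) L2) x) at_top"
    using L(3,4) level_pos[OF f] level_pos[OF g]
    by eventually_elim (simp add: lincomb_append lincomb_scale ln_divide_pos)
  with L(1,2) top show ?thesis
    by (intro level_SucI[of "L1 @ scale_terms (-1) L2"]) (simp_all add: germs_scale_terms image_Un)
qed

lemma Hset_in_level: "f \<in> Hset \<Longrightarrow> \<exists>n. f \<in> level n"
proof (induction rule: Hset.induct)
  case (iter_ln k)
  have "(ln ^^ k) \<in> level 0" by (auto intro!: exI[of _ k])
  then show ?case by blast
next
  case (exp_comp f)
  then show ?case using level_exp by blast
next
  case (power f \<alpha>)
  then show ?case using level_powr by blast
next
  case (times f g)
  then show ?case using level_mult by blast
next
  case (quot f g)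
  then show ?case using level_divide by blast
next
  case (germ_eq f g)
  then show ?case using level_germ_cong by blast
qed

text \<open>By induction on the level: ln f - ln g is a combination of lower-level germs,
  which are comparable by induction, so the trichotomy lemma applies.\<close>
lemma level_comparable: "f \<in> level n \<Longrightarrow> g \<in> level n \<Longrightarrow> comparable f g"
proof (induction n arbitrary: f g)
  case 0
  then obtain i j where "eventually (\<lambda>x. f x = (ln ^^ i) x) at_top"
    "eventually (\<lambda>x. g x = (ln ^^ j) x) at_top" by auto
  then have "eventually (\<lambda>x. (ln ^^ i) x = f x) at_top" "eventually (\<lambda>x. (ln ^^ j) x = g x) at_top"
    by (eventually_elim, simp)+
  then show ?case using comparable_germ_cong[OF iter_ln_comparable] by blast
next
  case (Suc n)
  obtain L1 L2 where L: "snd ` set L1 \<subseteq> level n" "snd ` set L2 \<subseteq> level n"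
    "eventually (\<lambda>x. ln (f x) = lincomb L1 x) at_top" "eventually (\<lambda>x. ln (g x) = lincomb L2 x) at_top"
    using level_Suc_ln[OF Suc.prems(1)] level_Suc_ln[OF Suc.prems(2)] by blast
  define D where "D = L1 @ scale_terms (-1) L2"
  have D_diff: "eventually (\<lambda>x. lincomb D x = ln (f x) - ln (g x)) at_top"
    using L(3,4) by eventually_elim (simp add: D_def lincomb_append lincomb_scale)
  have "snd ` set D \<subseteq> level n" using L(1,2) by (simp add: D_def germs_scale_terms image_Un)
  from lincomb_trichotomy[of "level n", OF _ _ this] Suc.IH level_at_top
  have "eventually (\<lambda>x. lincomb D x = 0) at_top
     \<or> filterlim (lincomb D) at_top at_top \<or> filterlim (lincomb D) at_bot at_top" by blast
  then show ?case
    using comparable_of_log_difference level_pos[OF Suc.prems(1)] level_pos[OF Suc.prems(2)] D_diff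
    by blast
qed

lemma Hset_at_top: "f \<in> Hset \<Longrightarrow> filterlim f at_top at_top"
  using Hset_in_level level_at_top by blast

lemma Hset_pos: "f \<in> Hset \<Longrightarrow> eventually (\<lambda>x. f x > 0) at_top"
  using Hset_at_top eventually_pos_at_top by blast

lemma Hset_comparable: "f \<in> Hset \<Longrightarrow> g \<in> Hset \<Longrightarrow> comparable f g"
proof -
  assume "f \<in> Hset" "g \<in> Hset"
  then obtain n1 n2 where "f \<in> level n1" "g \<in> level n2" using Hset_in_level by blast
  then have "f \<in> level (max n1 n2)" "g \<in> level (max n1 n2)"
    using level_mono[of n1 "max n1 n2"] level_mono[of n2 "max n1 n2"] by auto
  then show ?thesis using level_comparable by blast
qed

text \<open>Rule (iii) excludes squares, but f * f = f powr 2 is obtained through rule (ii).\<close>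
lemma Hset_mult: "f \<in> Hset \<Longrightarrow> g \<in> Hset \<Longrightarrow> (\<lambda>x. f x * g x) \<in> Hset"
proof (cases "eventually (\<lambda>x. f x = g x) at_top")
  case True
  assume f: "f \<in> Hset"
  have "(\<lambda>x. f x powr 2) \<in> Hset" by (rule Hset.power[OF f Hset_pos[OF f]]) simp
  moreover have "eventually (\<lambda>x. f x powr 2 = f x * g x) at_top"
    using Hset_pos[OF f] True by eventually_elim (simp add: powr_numeral power2_eq_square)
  ultimately show ?thesis by (rule Hset.germ_eq)
next
  case False
  assume "f \<in> Hset" "g \<in> Hset"
  then show ?thesis using Hset.times False by blast
qed

lemma Pset_germ_cong:
  assumes p: "p \<in> Pset" and eq: "eventually (\<lambda>x. p x = q x) at_top"
  shows "q \<in> Pset"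
proof -
  from p consider "p \<in> Hset" | "eventually (\<lambda>x. p x = 1) at_top"
    | f where "f \<in> Hset" "eventually (\<lambda>x. p x = 1 / f x) at_top"
    unfolding Pset_def by blast
  then show ?thesis
  proof cases
    case 1
    then have "q \<in> Hset" using Hset.germ_eq eq by blast
    then show ?thesis unfolding Pset_def by blast
  next
    case 2
    have "eventually (\<lambda>x. q x = 1) at_top" using 2 eq by eventually_elim simp
    then show ?thesis unfolding Pset_def by blast
  next
    case (3 f)
    have "eventually (\<lambda>x. q x = 1 / f x) at_top" using 3(2) eq by eventually_elim simp
    with 3(1) show ?thesis unfolding Pset_def by blast
  qed
qed

definition Hone :: "(real \<Rightarrow> real) set" where
  "Hone = Hset \<union> {u. eventually (\<lambda>x. u x = 1) at_top}"

lemma Hone_mult: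
  assumes "u \<in> Hone" "v \<in> Hone" shows "(\<lambda>x. u x * v x) \<in> Hone"
proof -
  from assms consider "u \<in> Hset" "v \<in> Hset" | "u \<in> Hset" "eventually (\<lambda>x. v x = 1) at_top"
    | "eventually (\<lambda>x. u x = 1) at_top" "v \<in> Hset"
    | "eventually (\<lambda>x. u x = 1) at_top" "eventually (\<lambda>x. v x = 1) at_top"
    unfolding Hone_def by blast
  then show ?thesis
  proof cases
    case 1
    then show ?thesis using Hset_mult unfolding Hone_def by blast
  next
    case 2
    have "eventually (\<lambda>x. u x = u x * v x) at_top" using 2(2) by eventually_elim simp
    from Hset.germ_eq[OF 2(1) this] show ?thesis unfolding Hone_def by blast
  next
    case 3
    have "eventually (\<lambda>x. v x = u x * v x) at_top" using 3(1) by eventually_elim simp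
    from Hset.germ_eq[OF 3(2) this] show ?thesis unfolding Hone_def by blast
  next
    case 4
    have "eventually (\<lambda>x. u x * v x = 1) at_top" using 4 by eventually_elim simp
    then show ?thesis unfolding Hone_def by blast
  qed
qed

lemma Pset_quotient_form:
  assumes "p \<in> Pset"
  obtains u v where "u \<in> Hone" "v \<in> Hone" "eventually (\<lambda>x. p x = u x / v x) at_top"
proof -
  have one: "(\<lambda>x. 1) \<in> Hone" by (simp add: Hone_def)
  from assms consider "p \<in> Hset" | "eventually (\<lambda>x. p x = 1) at_top"
    | f where "f \<in> Hset" "eventually (\<lambda>x. p x = 1 / f x) at_top"
    unfolding Pset_def by blast
  then show ?thesis
  proof cases
    case 1
    then show ?thesis using that[of p "\<lambda>x. 1"] one by (simp add: Hone_def)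
  next
    case 2
    then show ?thesis using that[of "\<lambda>x. 1" "\<lambda>x. 1"] one by simp
  next
    case 3
    then show ?thesis using that[of "\<lambda>x. 1" f] one by (simp add: Hone_def)
  qed
qed

text \<open>The converse direction rests on comparability: f/g is eventually 1, in H, or the
  reciprocal of an element of H.\<close>
lemma Hset_divide_in_Pset:
  assumes f: "f \<in> Hset" and g: "g \<in> Hset"
  shows "(\<lambda>x. f x / g x) \<in> Pset"
proof -
  from Hset_comparable[OF f g] consider "eventually (\<lambda>x. f x = g x) at_top"
    | "filterlim (\<lambda>x. f x / g x) at_top at_top" | "filterlim (\<lambda>x. g x / f x) at_top at_top"
    unfolding comparable_def by blast
  then show ?thesis
  proof cases
    case 1
    have "eventually (\<lambda>x. f x / g x = 1) at_top" using 1 Hset_pos[OF g] by eventually_elim simp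
    then show ?thesis unfolding Pset_def by blast
  next
    case 2
    then show ?thesis using Hset.quot[OF f g] unfolding Pset_def by blast
  next
    case 3
    then have "(\<lambda>x. g x / f x) \<in> Hset" by (rule Hset.quot[OF g f])
    then show ?thesis unfolding Pset_def mem_Collect_eq
      by (intro disjI2 bexI[of _ "\<lambda>x. g x / f x"]) simp_all
  qed
qed

lemma Hone_divide_in_Pset:
  assumes u: "u \<in> Hone" and v: "v \<in> Hone" shows "(\<lambda>x. u x / v x) \<in> Pset"
proof -
  from v consider "v \<in> Hset" | "eventually (\<lambda>x. v x = 1) at_top"
    unfolding Hone_def by blast
  then show ?thesis
  proof cases
    case 1
    from u consider "u \<in> Hset" | "eventually (\<lambda>x. u x = 1) at_top"
      unfolding Hone_def by blast
    then show ?thesis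
    proof cases
      case 1
      then show ?thesis using Hset_divide_in_Pset \<open>v \<in> Hset\<close> by blast
    next
      case 2
      have "eventually (\<lambda>x. u x / v x = 1 / v x) at_top" using 2 by eventually_elim simp
      with \<open>v \<in> Hset\<close> show ?thesis unfolding Pset_def by blast
    qed
  next
    case 2
    have "u \<in> Pset" using u unfolding Hone_def Pset_def by blast
    moreover have "eventually (\<lambda>x. u x = u x / v x) at_top" using 2 by eventually_elim simp
    ultimately show ?thesis by (rule Pset_germ_cong)
  qed
qed

theorem mainTheorem4:
  assumes "p \<in> Pset" and "q \<in> Pset"
  shows "(\<lambda>x. p x * q x) \<in> Pset \<and> (\<lambda>x. p x / q x) \<in> Pset"
proof -
  obtain u1 v1 where uv1: "u1 \<in> Hone" "v1 \<in> Hone" "eventually (\<lambda>x. p x = u1 x / v1 x) at_top"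
    using Pset_quotient_form[OF assms(1)] by blast
  obtain u2 v2 where uv2: "u2 \<in> Hone" "v2 \<in> Hone" "eventually (\<lambda>x. q x = u2 x / v2 x) at_top"
    using Pset_quotient_form[OF assms(2)] by blast
  have prod: "(\<lambda>x. (u1 x * u2 x) / (v1 x * v2 x)) \<in> Pset"
    and quot: "(\<lambda>x. (u1 x * v2 x) / (v1 x * u2 x)) \<in> Pset"
    by (intro Hone_divide_in_Pset Hone_mult uv1(1,2) uv2(1,2))+
  have "eventually (\<lambda>x. (u1 x * u2 x) / (v1 x * v2 x) = p x * q x) at_top"
    and "eventually (\<lambda>x. (u1 x * v2 x) / (v1 x * u2 x) = p x / q x) at_top"
    using uv1(3) uv2(3) by (eventually_elim, simp)+
  with prod quot show ?thesis by (blast intro: Pset_germ_cong)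
qed

end
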